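(* Let $t$ be a closed $\lambda$-term. If there are a value $v$ and a reduction sequence $t\to_{\beta_v}^* v$, then there is a derivation of $\vdash t:\mathtt{n}$ (empty type context) in the silly multi type system.
   Context: $\lambda$-terms $t ::= x\mid\lambda x.t\mid tu$; values are abstractions. CbV contexts $V ::= \langle\cdot\rangle\mid tV\mid Vt$; root rule $(\lambda x.t)v\mapsto_{\beta_v} t\{x:=v\}$ for $v$ a value; $\to_{\beta_v}$ is its closure under CbV contexts. Silly multi types: linear types $L ::= \mathtt{n} \mid M\multimap L$; multi types $M ::= [L_i]_{i\in I}$ finite multisets ($\mathbf{0}$ empty, $\uplus$ sum). Type contexts $\Gamma$ map variables to multi types with finite support; $\uplus$ pointwise; $\Gamma\setminus\!\!\setminus x$ sets $x$ to $\mathbf{0}$. Judgements $\Gamma\vdash^{(m,e)} t:T$, written $\Gamma\vdash t:T$ when indices are irrelevant. Rules: (ax) $x:[L]\vdash^{(0,1)} x:L$; (many) from $(\Gamma_i\vdash^{(m_i,e_i)} t : L_i)_{i\in I}$, $I$ finite possibly empty, infer $\uplus_i\Gamma_i\vdash^{(\sum m_i,\sum e_i)} t : [L_i]_{i\in I}$; ($\mathrm{ax}_\lambda$) $\vdash^{(0,0)}\lambda x.t:\mathtt{n}$; ($\lambda$) from $\Gamma\vdash^{(m,e)}t:L$ infer $\Gamma\setminus\!\!\setminus x\vdash^{(m,e)}\lambda x.t:\Gamma(x)\multimap L$; (@) from $\Gamma\vdash^{(m,e)} t : M\multimap L$ and $\Delta\vdash^{(m',e')} u : M\uplus[\mathtt{n}]$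 infer $\Gamma\uplus\Delta\vdash^{(m+m'+1,e+e')} tu : L$. *)

theory Defs
  imports Main "HOL-Library.Multiset"
begin

datatype trm = Var nat | Lam trm | App trm trm

definition is_value :: "trm \<Rightarrow> bool" where
  "is_value t \<longleftrightarrow> (\<exists>b. t = Lam b)"

fun fvs :: "nat \<Rightarrow> trm \<Rightarrow> nat set" where
  "fvs k (Var i) = (if i < k then {} else {i - k})"
| "fvs k (Lam t) = fvs (Suc k) t"
| "fvs k (App t u) = fvs k t \<union> fvs k u"

definition closed :: "trm \<Rightarrow> bool" where
  "closed t \<longleftrightarrow> fvs 0 t = {}"

fun lift :: "nat \<Rightarrow> trm \<Rightarrow> trm" where
  "lift k (Var i) = (if i < k then Var i else Var (Suc i))"
| "lift k (Lam t) = Lam (lift (Suc k) t)"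
| "lift k (App t u) = App (lift k t) (lift k u)"

fun subst :: "trm \<Rightarrow> nat \<Rightarrow> trm \<Rightarrow> trm" where
  "subst (Var i) k s = (if i < k then Var i else if i = k then s else Var (i - 1))"
| "subst (Lam t) k s = Lam (subst t (Suc k) (lift 0 s))"
| "subst (App t u) k s = App (subst t k s) (subst u k s)"

inductive beta_v :: "trm \<Rightarrow> trm \<Rightarrow> bool" where
  root: "is_value v \<Longrightarrow> beta_v (App (Lam t) v) (subst t 0 v)"
| appR: "beta_v u u' \<Longrightarrow> beta_v (App t u) (App t u')"
| appL: "beta_v t t' \<Longrightarrow> beta_v (App t u) (App t' u)"

abbreviation beta_v_star :: "trm \<Rightarrow> trm \<Rightarrow> bool" where
  "beta_v_star \<equiv> beta_v\<^sup>*\<^sup>*"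

datatype lty = Nt | Arr "lty multiset" lty

type_synonym mty = "lty multiset"
type_synonym ctx = "nat \<Rightarrow> mty"

definition empty_ctx :: ctx where
  "empty_ctx = (\<lambda>_. {#})"

definition ctx_plus :: "ctx \<Rightarrow> ctx \<Rightarrow> ctx" where
  "ctx_plus \<Gamma> \<Delta> = (\<lambda>x. \<Gamma> x + \<Delta> x)"

text \<open>In the abstraction rule, variable 0 is bound and the remaining context is shifted down.
  The (many) rule takes a finite (possibly empty) family, represented as a list.\<close>
inductive typ_l :: "ctx \<Rightarrow> trm \<Rightarrow> lty \<Rightarrow> nat \<Rightarrow> nat \<Rightarrow> bool"
  and typ_m :: "ctx \<Rightarrow> trm \<Rightarrow> mty \<Rightarrow> nat \<Rightarrow> nat \<Rightarrow> bool" where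
  ax: "typ_l (\<lambda>y. if y = x then {#L#} else {#}) (Var x) L 0 1"
| many: "(\<forall>d \<in> set ds. typ_l (fst d) t (fst (snd d)) (fst (snd (snd d))) (snd (snd (snd d))))
         \<Longrightarrow> typ_m (\<lambda>y. sum_list (map (\<lambda>d. fst d y) ds)) t
                   (mset (map (\<lambda>d. fst (snd d)) ds))
                   (sum_list (map (\<lambda>d. fst (snd (snd d))) ds))
                   (sum_list (map (\<lambda>d. snd (snd (snd d))) ds))"
| ax_lam: "typ_l empty_ctx (Lam t) Nt 0 0"
| lam: "typ_l \<Gamma> t L m e \<Longrightarrow> typ_l (\<lambda>y. \<Gamma> (Suc y)) (Lam t) (Arr (\<Gamma> 0) L) m e"
| app: "typ_l \<Gamma> t (Arr M L) m e \<Longrightarrow> typ_m \<Delta> u (M + {#Nt#}) m' e'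
        \<Longrightarrow> typ_l (ctx_plus \<Gamma> \<Delta>) (App t u) L (m + m' + 1) (e + e')"

end

theory Submission
  imports Defs
begin

text \<open>Every value has type \<open>n\<close> in the empty context by rule \<open>ax\<^sub>\<lambda>\<close>, so it suffices to show
  that typability is preserved by call-by-value expansion. For the root step this is
  anti-substitution: a typing of \<open>t{x:=v}\<close> splits into a typing of \<open>t\<close> assigning some \<open>M\<close> to \<open>x\<close>
  and a typing \<open>v : M\<close>, and the extra \<open>[n]\<close> that the application rule demands of the argument
  \<open>v\<close> is again provided by \<open>ax\<^sub>\<lambda>\<close>.\<close>

definition has_ltype :: "ctx \<Rightarrow> trm \<Rightarrow> lty \<Rightarrow> bool" where
  "has_ltype \<Gamma> t L \<longleftrightarrow> (\<exists>m e. typ_l \<Gamma> t L m e)"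

inductive has_mtype :: "ctx \<Rightarrow> trm \<Rightarrow> mty \<Rightarrow> bool" where
  has_mtype_empty: "has_mtype empty_ctx t {#}"
| has_mtype_add_mset:
    "has_mtype \<Gamma> t M \<Longrightarrow> has_ltype \<Delta> t L \<Longrightarrow> has_mtype (ctx_plus \<Gamma> \<Delta>) t (add_mset L M)"

definition ctx_single :: "nat \<Rightarrow> lty \<Rightarrow> ctx" where
  "ctx_single x L = (\<lambda>y. if y = x then {#L#} else {#})"

definition ctx_del :: "nat \<Rightarrow> ctx \<Rightarrow> ctx" where
  "ctx_del k \<Gamma> = (\<lambda>y. if y < k then \<Gamma> y else \<Gamma> (Suc y))"

lemma ctx_plus_empty [simp]: "ctx_plus \<Gamma> empty_ctx = \<Gamma>" "ctx_plus empty_ctx \<Gamma> = \<Gamma>"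
  by (auto simp: ctx_plus_def empty_ctx_def)

lemma ctx_plus_apply: "ctx_plus \<Gamma> \<Delta> x = \<Gamma> x + \<Delta> x"
  by (simp add: ctx_plus_def)

lemma ctx_plus_assoc: "ctx_plus (ctx_plus \<Gamma> \<Delta>) \<Theta> = ctx_plus \<Gamma> (ctx_plus \<Delta> \<Theta>)"
  by (auto simp: ctx_plus_def add_ac)

lemma ctx_plus_swap_middle:
  "ctx_plus (ctx_plus \<Gamma>1 \<Gamma>2) (ctx_plus \<Delta>1 \<Delta>2) = ctx_plus (ctx_plus \<Gamma>1 \<Delta>1) (ctx_plus \<Gamma>2 \<Delta>2)"
  by (auto simp: ctx_plus_def add_ac)

lemma ctx_del_plus [simp]: "ctx_del k (ctx_plus \<Gamma> \<Delta>) = ctx_plus (ctx_del k \<Gamma>) (ctx_del k \<Delta>)"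
  by (auto simp: ctx_del_def ctx_plus_def)

lemma ctx_del_single:
  "ctx_del k (ctx_single i L) =
    (if i < k then ctx_single i L else if i = k then empty_ctx else ctx_single (i - 1) L)"
  by (auto simp: ctx_del_def ctx_single_def empty_ctx_def fun_eq_iff)

lemma ctx_del_empty [simp]: "ctx_del k empty_ctx = empty_ctx"
  by (auto simp: ctx_del_def empty_ctx_def)

lemma has_mtype_of_derivations:
  assumes "\<forall>d \<in> set ds. typ_l (fst d) t (fst (snd d)) (fst (snd (snd d))) (snd (snd (snd d)))"
  shows "has_mtype (\<lambda>y. \<Sum>d\<leftarrow>ds. fst d y) t {#fst (snd d). d \<in># mset ds#}"
  using assms
proof (induction ds)
  case Nil
  then show ?case using has_mtype_empty[of t] by (simp add: empty_ctx_def)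
next
  case (Cons d ds)
  then have "has_mtype (ctx_plus (\<lambda>y. \<Sum>d\<leftarrow>ds. fst d y) (fst d)) t
      (add_mset (fst (snd d)) {#fst (snd d). d \<in># mset ds#})"
    by (intro has_mtype_add_mset) (auto simp: has_ltype_def)
  moreover have "ctx_plus (\<lambda>y. \<Sum>d\<leftarrow>ds. fst d y) (fst d) = (\<lambda>y. \<Sum>d\<leftarrow>d # ds. fst d y)"
    by (auto simp: ctx_plus_def add_ac)
  ultimately show ?case by simp
qed

inductive_cases typ_mE: "typ_m \<Gamma> t M m e"

lemma has_mtype_iff: "has_mtype \<Gamma> t M \<longleftrightarrow> (\<exists>m e. typ_m \<Gamma> t M m e)"
proof
  show "\<exists>m e. typ_m \<Gamma> t M m e" if "has_mtype \<Gamma> t M"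
    using that
  proof (induction rule: has_mtype.induct)
    case (has_mtype_empty t)
    show ?case using many[of "[]" t] by (auto simp: empty_ctx_def)
  next
    case (has_mtype_add_mset \<Gamma> t M \<Delta> L)
    then obtain ds where ds: "\<Gamma> = (\<lambda>y. \<Sum>d\<leftarrow>ds. fst d y)" "M = mset (map (\<lambda>d. fst (snd d)) ds)"
        "\<forall>d \<in> set ds. typ_l (fst d) t (fst (snd d)) (fst (snd (snd d))) (snd (snd (snd d)))"
      by (auto elim: typ_mE)
    obtain m e where "typ_l \<Delta> t L m e"
      using has_mtype_add_mset.hyps(2) by (auto simp: has_ltype_def)
    with ds have "typ_m (\<lambda>y. \<Sum>d\<leftarrow>(\<Delta>, L, m, e) # ds. fst d y) t
        (mset (map (\<lambda>d. fst (snd d)) ((\<Delta>, L, m, e) # ds)))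
        (\<Sum>d\<leftarrow>(\<Delta>, L, m, e) # ds. fst (snd (snd d))) (\<Sum>d\<leftarrow>(\<Delta>, L, m, e) # ds. snd (snd (snd d)))"
      by (intro many) auto
    moreover have "(\<lambda>y. \<Sum>d\<leftarrow>(\<Delta>, L, m, e) # ds. fst d y) = ctx_plus \<Gamma> \<Delta>"
      using ds by (auto simp: ctx_plus_def add_ac)
    ultimately show ?case using ds by auto
  qed
next
  show "has_mtype \<Gamma> t M" if "\<exists>m e. typ_m \<Gamma> t M m e"
    using that by (auto elim!: typ_mE simp: has_mtype_of_derivations)
qed

lemma has_mtype_induct_term [consumes 1, case_names empty add_mset]:
  assumes "has_mtype \<Gamma> t M"
    and "P empty_ctx {#}"
    and "\<And>\<Gamma> M \<Delta> L. has_mtype \<Gamma> t M \<Longrightarrow> P \<Gamma> M \<Longrightarrow> has_ltype \<Delta> t L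
      \<Longrightarrow> P (ctx_plus \<Gamma> \<Delta>) (add_mset L M)"
  shows "P \<Gamma> M"
proof -
  have "u = t \<Longrightarrow> P \<Gamma> M" if "has_mtype \<Gamma> u M" for u
    using that by (induction rule: has_mtype.induct) (auto intro: assms(2,3))
  then show ?thesis using assms(1) by blast
qed

lemma has_mtype_plus:
  assumes "has_mtype \<Gamma> t M" and "has_mtype \<Delta> t N"
  shows "has_mtype (ctx_plus \<Gamma> \<Delta>) t (M + N)"
  using assms(2)
proof (induction rule: has_mtype_induct_term)
  case (add_mset \<Delta> N \<Theta> L)
  then have "has_mtype (ctx_plus (ctx_plus \<Gamma> \<Delta>) \<Theta>) t (add_mset L (M + N))"
    by (intro has_mtype.has_mtype_add_mset)
  then show ?case by (simp add: ctx_plus_assoc)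
qed (use assms(1) in simp)

lemma has_mtype_single: "has_ltype \<Gamma> t L \<Longrightarrow> has_mtype \<Gamma> t {#L#}"
  using has_mtype_add_mset[OF has_mtype_empty] by fastforce

lemma has_mtype_mono:
  assumes "\<And>\<Gamma> L. has_ltype \<Gamma> u L \<Longrightarrow> has_ltype \<Gamma> u' L" and "has_mtype \<Gamma> u M"
  shows "has_mtype \<Gamma> u' M"
  using assms(2) by (induction rule: has_mtype_induct_term)
    (auto intro: has_mtype.intros assms(1))

inductive_cases typ_l_VarE: "typ_l \<Gamma> (Var x) L m e"
inductive_cases typ_l_LamE: "typ_l \<Gamma> (Lam t) L m e"
inductive_cases typ_l_AppE: "typ_l \<Gamma> (App t u) L m e"

lemma has_ltype_Var_iff: "has_ltype \<Gamma> (Var x) L \<longleftrightarrow> \<Gamma> = ctx_single x L"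
  by (auto simp: has_ltype_def ctx_single_def intro: ax elim: typ_l_VarE)

lemma has_ltype_Lam_Nt: "has_ltype empty_ctx (Lam t) Nt"
  using ax_lam by (auto simp: has_ltype_def)

lemma has_ltype_Lam: "has_ltype \<Gamma> t L \<Longrightarrow> has_ltype (\<lambda>y. \<Gamma> (Suc y)) (Lam t) (Arr (\<Gamma> 0) L)"
  unfolding has_ltype_def using lam by blast

lemma has_ltype_App:
  "has_ltype \<Gamma> t (Arr M L) \<Longrightarrow> has_mtype \<Delta> u (M + {#Nt#})
    \<Longrightarrow> has_ltype (ctx_plus \<Gamma> \<Delta>) (App t u) L"
  using app by (auto simp: has_ltype_def has_mtype_iff) blast

lemma has_ltype_LamE:
  assumes "has_ltype \<Gamma> (Lam t) L"
  obtains "\<Gamma> = empty_ctx" "L = Nt"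
    | \<Gamma>' L' where "has_ltype \<Gamma>' t L'" "\<Gamma> = (\<lambda>y. \<Gamma>' (Suc y))" "L = Arr (\<Gamma>' 0) L'"
  using assms by (auto simp: has_ltype_def elim!: typ_l_LamE)

lemma has_ltype_AppE:
  assumes "has_ltype \<Gamma> (App t u) L"
  obtains \<Gamma>' \<Delta> M where "has_ltype \<Gamma>' t (Arr M L)" "has_mtype \<Delta> u (M + {#Nt#})"
    "\<Gamma> = ctx_plus \<Gamma>' \<Delta>"
  using assms unfolding has_ltype_def has_mtype_iff by (auto elim!: typ_l_AppE) blast

subsection \<open>Lifting and anti-substitution\<close>

text \<open>The argument of an application carries a multi type, so the structural inductions on
  terms below prove their claims for linear typings and transfer them to multi typings of the
  same term with the following two lemmas.\<close>

lemma has_mtype_liftD_of_ltype: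
  assumes "\<And>\<Gamma> L. has_ltype \<Gamma> (lift k s) L \<Longrightarrow> \<Gamma> k = {#} \<and> has_ltype (ctx_del k \<Gamma>) s L"
    and "has_mtype \<Gamma> (lift k s) M"
  shows "\<Gamma> k = {#} \<and> has_mtype (ctx_del k \<Gamma>) s M"
  using assms(2)
proof (induction rule: has_mtype_induct_term)
  case empty
  then show ?case by (simp add: has_mtype_empty) (simp add: empty_ctx_def)
next
  case (add_mset \<Gamma> M \<Delta> L)
  then show ?case using assms(1)[of \<Delta> L]
    by (auto intro: has_mtype.has_mtype_add_mset simp: ctx_plus_apply[of \<Gamma> \<Delta> k])
qed

lemma has_ltype_liftD:
  "has_ltype \<Gamma> (lift k s) L \<Longrightarrow> \<Gamma> k = {#} \<and> has_ltype (ctx_del k \<Gamma>) s L"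
proof (induction s arbitrary: k \<Gamma> L)
  case (Var i)
  then show ?case
    by (auto simp: has_ltype_Var_iff ctx_single_def ctx_del_def split: if_splits)
next
  case (Lam b)
  from Lam.prems[simplified] show ?case
  proof (cases rule: has_ltype_LamE)
    case 1
    then show ?thesis using has_ltype_Lam_Nt by (simp add: ctx_del_def empty_ctx_def)
  next
    case (2 \<Gamma>' L')
    with Lam.IH have "\<Gamma>' (Suc k) = {#}" "has_ltype (ctx_del (Suc k) \<Gamma>') b L'"
      by auto
    with 2 show ?thesis
      using has_ltype_Lam[of "ctx_del (Suc k) \<Gamma>'" b L']
      by (auto simp: ctx_del_def)
  qed
next
  case (App s1 s2)
  from App.prems obtain \<Gamma>' \<Delta> M where \<Gamma>':
    "has_ltype \<Gamma>' (lift k s1) (Arr M L)" and \<Delta>: "has_mtype \<Delta> (lift k s2) (M + {#Nt#})"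
    and "\<Gamma> = ctx_plus \<Gamma>' \<Delta>"
    by (auto elim: has_ltype_AppE)
  moreover note App.IH(1)[OF \<Gamma>'] has_mtype_liftD_of_ltype[OF App.IH(2) \<Delta>]
  ultimately show ?case
    by (auto intro: has_ltype_App simp: ctx_plus_apply[of \<Gamma>' \<Delta> k])
qed

lemma has_mtype_liftD:
  "has_mtype \<Gamma> (lift k s) M \<Longrightarrow> \<Gamma> k = {#} \<and> has_mtype (ctx_del k \<Gamma>) s M"
  using has_mtype_liftD_of_ltype[OF has_ltype_liftD] .

lemma has_mtype_substD_of_ltype:
  assumes "\<And>\<Gamma> L. has_ltype \<Gamma> (subst t k s) L \<Longrightarrow>
      \<exists>\<Gamma>' \<Delta>. has_ltype \<Gamma>' t L \<and> has_mtype \<Delta> s (\<Gamma>' k) \<and> \<Gamma> = ctx_plus (ctx_del k \<Gamma>') \<Delta>"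
    and "has_mtype \<Gamma> (subst t k s) M"
  shows "\<exists>\<Gamma>' \<Delta>. has_mtype \<Gamma>' t M \<and> has_mtype \<Delta> s (\<Gamma>' k) \<and> \<Gamma> = ctx_plus (ctx_del k \<Gamma>') \<Delta>"
  using assms(2)
proof (induction rule: has_mtype_induct_term)
  case empty
  have "empty_ctx k = {#}" by (simp add: empty_ctx_def)
  then show ?case using has_mtype_empty by fastforce
next
  case (add_mset \<Gamma> M \<Delta> L)
  from add_mset.IH obtain \<Gamma>1 \<Delta>1 where
    \<Gamma>1: "has_mtype \<Gamma>1 t M" "has_mtype \<Delta>1 s (\<Gamma>1 k)" "\<Gamma> = ctx_plus (ctx_del k \<Gamma>1) \<Delta>1"
    by blast
  from assms(1)[OF add_mset.hyps(2)] obtain \<Gamma>2 \<Delta>2 where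
    \<Gamma>2: "has_ltype \<Gamma>2 t L" "has_mtype \<Delta>2 s (\<Gamma>2 k)" "\<Delta> = ctx_plus (ctx_del k \<Gamma>2) \<Delta>2"
    by blast
  have "has_mtype (ctx_plus \<Gamma>1 \<Gamma>2) t (add_mset L M)"
    using \<Gamma>1(1) \<Gamma>2(1) by (rule has_mtype.has_mtype_add_mset)
  moreover have "has_mtype (ctx_plus \<Delta>1 \<Delta>2) s (ctx_plus \<Gamma>1 \<Gamma>2 k)"
    using has_mtype_plus[OF \<Gamma>1(2) \<Gamma>2(2)] by (simp add: ctx_plus_apply)
  moreover have "ctx_plus \<Gamma> \<Delta> = ctx_plus (ctx_del k (ctx_plus \<Gamma>1 \<Gamma>2)) (ctx_plus \<Delta>1 \<Delta>2)"
    using \<Gamma>1(3) \<Gamma>2(3) by (simp add: ctx_plus_swap_middle)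
  ultimately show ?case by blast
qed

lemma has_ltype_substD:
  "has_ltype \<Gamma> (subst t k s) L \<Longrightarrow>
    \<exists>\<Gamma>' \<Delta>. has_ltype \<Gamma>' t L \<and> has_mtype \<Delta> s (\<Gamma>' k) \<and> \<Gamma> = ctx_plus (ctx_del k \<Gamma>') \<Delta>"
proof (induction t arbitrary: k s \<Gamma> L)
  case (Var i)
  have single: "has_ltype (ctx_single i L) (Var i) L" "ctx_single i L k = (if i = k then {#L#} else {#})"
    by (auto simp: has_ltype_Var_iff ctx_single_def)
  show ?case
  proof (cases "i = k")
    case True
    with Var have "has_mtype \<Gamma> s {#L#}" by (simp add: has_mtype_single)
    with True single show ?thesis by (auto simp: ctx_del_single)
  next
    case False
    with Var have "\<Gamma> = ctx_del k (ctx_single i L)"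
      by (auto simp: has_ltype_Var_iff ctx_del_single)
    with False single show ?thesis
      by (intro exI[of _ "ctx_single i L"] exI[of _ empty_ctx]) (simp add: has_mtype_empty)
  qed
next
  case (Lam b)
  from Lam.prems[simplified] show ?case
  proof (cases rule: has_ltype_LamE)
    case 1
    have "empty_ctx k = {#}" by (simp add: empty_ctx_def)
    with 1 show ?thesis using has_ltype_Lam_Nt has_mtype_empty by fastforce
  next
    case (2 \<Gamma>0 L0)
    with Lam.IH obtain \<Gamma>1 \<Delta>1 where \<Gamma>1: "has_ltype \<Gamma>1 b L0"
      and lifted: "has_mtype \<Delta>1 (lift 0 s) (\<Gamma>1 (Suc k))"
      and "\<Gamma>0 = ctx_plus (ctx_del (Suc k) \<Gamma>1) \<Delta>1"
      by blast
    moreover from has_mtype_liftD[OF lifted]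
    have "\<Delta>1 0 = {#}" "has_mtype (ctx_del 0 \<Delta>1) s (\<Gamma>1 (Suc k))" by auto
    moreover note has_ltype_Lam[OF \<Gamma>1]
    ultimately show ?thesis using 2
      by (intro exI[of _ "\<lambda>y. \<Gamma>1 (Suc y)"] exI[of _ "ctx_del 0 \<Delta>1"])
        (auto simp: ctx_del_def ctx_plus_def fun_eq_iff)
  qed
next
  case (App t1 t2)
  from App.prems obtain \<Gamma>' \<Delta> M where
    t1: "has_ltype \<Gamma>' (subst t1 k s) (Arr M L)" and t2: "has_mtype \<Delta> (subst t2 k s) (M + {#Nt#})"
    and \<Gamma>: "\<Gamma> = ctx_plus \<Gamma>' \<Delta>"
    by (auto elim: has_ltype_AppE)
  from App.IH(1)[OF t1] obtain \<Gamma>1 \<Delta>1 where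
    \<Gamma>1: "has_ltype \<Gamma>1 t1 (Arr M L)" "has_mtype \<Delta>1 s (\<Gamma>1 k)" "\<Gamma>' = ctx_plus (ctx_del k \<Gamma>1) \<Delta>1"
    by blast
  from has_mtype_substD_of_ltype[OF App.IH(2) t2] obtain \<Gamma>2 \<Delta>2 where
    \<Gamma>2: "has_mtype \<Gamma>2 t2 (M + {#Nt#})" "has_mtype \<Delta>2 s (\<Gamma>2 k)" "\<Delta> = ctx_plus (ctx_del k \<Gamma>2) \<Delta>2"
    by blast
  have "has_ltype (ctx_plus \<Gamma>1 \<Gamma>2) (App t1 t2) L"
    using \<Gamma>1(1) \<Gamma>2(1) by (rule has_ltype_App)
  moreover have "has_mtype (ctx_plus \<Delta>1 \<Delta>2) s (ctx_plus \<Gamma>1 \<Gamma>2 k)"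
    using has_mtype_plus[OF \<Gamma>1(2) \<Gamma>2(2)] by (simp add: ctx_plus_apply)
  moreover have "\<Gamma> = ctx_plus (ctx_del k (ctx_plus \<Gamma>1 \<Gamma>2)) (ctx_plus \<Delta>1 \<Delta>2)"
    using \<Gamma> \<Gamma>1(3) \<Gamma>2(3) by (simp add: ctx_plus_swap_middle)
  ultimately show ?case by blast
qed

subsection \<open>Subject expansion\<close>

lemma has_ltype_value_Nt: "is_value v \<Longrightarrow> has_ltype empty_ctx v Nt"
  by (auto simp: is_value_def has_ltype_Lam_Nt)

lemma has_ltype_beta_v_expand: "beta_v t t' \<Longrightarrow> has_ltype \<Gamma> t' L \<Longrightarrow> has_ltype \<Gamma> t L"
proof (induction arbitrary: \<Gamma> L rule: beta_v.induct)
  case (root v b)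
  then obtain \<Gamma>' \<Delta> where b: "has_ltype \<Gamma>' b L" and v: "has_mtype \<Delta> v (\<Gamma>' 0)"
    and \<Gamma>: "\<Gamma> = ctx_plus (ctx_del 0 \<Gamma>') \<Delta>"
    using has_ltype_substD by blast
  have "has_mtype (ctx_plus \<Delta> empty_ctx) v (add_mset Nt (\<Gamma>' 0))"
    using v has_ltype_value_Nt[OF root.hyps] by (rule has_mtype_add_mset)
  with has_ltype_Lam[OF b] have "has_ltype (ctx_plus (\<lambda>y. \<Gamma>' (Suc y)) \<Delta>) (App (Lam b) v) L"
    by (intro has_ltype_App) simp_all
  then show ?case by (simp add: \<Gamma> ctx_del_def)
next
  case (appR u u' t)
  from appR.prems obtain \<Gamma>' \<Delta> M where t: "has_ltype \<Gamma>' t (Arr M L)"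
    and u': "has_mtype \<Delta> u' (M + {#Nt#})" and "\<Gamma> = ctx_plus \<Gamma>' \<Delta>"
    by (auto elim: has_ltype_AppE)
  with has_ltype_App[OF t has_mtype_mono[OF appR.IH u']] show ?case by simp
next
  case (appL t t' u)
  from appL.prems obtain \<Gamma>' \<Delta> M where t': "has_ltype \<Gamma>' t' (Arr M L)"
    and u: "has_mtype \<Delta> u (M + {#Nt#})" and "\<Gamma> = ctx_plus \<Gamma>' \<Delta>"
    by (auto elim: has_ltype_AppE)
  with has_ltype_App[OF appL.IH[OF t'] u] show ?case by simp
qed

lemma has_ltype_beta_v_star_expand:
  "beta_v_star t t' \<Longrightarrow> has_ltype \<Gamma> t' L \<Longrightarrow> has_ltype \<Gamma> t L"
  by (induction rule: converse_rtranclp_induct) (auto intro: has_ltype_beta_v_expand)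

theorem theorem7p4:
  assumes "closed t"
    and "is_value v"
    and "beta_v_star t v"
  shows "\<exists>m e. typ_l empty_ctx t Nt m e"
proof -
  have "has_ltype empty_ctx t Nt"
    using assms(3) has_ltype_value_Nt[OF assms(2)] by (rule has_ltype_beta_v_star_expand)
  then show ?thesis by (simp add: has_ltype_def)
qed

end
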